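(* For every integer $n\ge 4$, $px_{n-1,2}(K_n)=2$.
   Context: All graphs are finite, simple and undirected. An edge-coloring of a graph may assign the same color to adjacent edges. A tree $T$ in an edge-colored graph is a proper tree if no two adjacent edges of $T$ receive the same color. For $S\subseteq V(G)$ with $|S|\ge 2$, an $S$-tree is a tree in $G$ containing all vertices of $S$. $S$-trees $T_1,\dots,T_\ell$ are internally disjoint if $E(T_i)\cap E(T_j)=\emptyset$ and $V(T_i)\cap V(T_j)=S$ for all $i\ne j$. For a connected graph $G$ of order $n$ and integers $k,\ell$ with $2\le k\le n$ and $1\le \ell\le \kappa_k(G)$ (where $\kappa_k(G)$ is the minimum, over all $k$-subsets $S$ of $V(G)$, of the maximum number of internally disjoint $S$-trees), the $(k,\ell)$-proper index $px_{k,\ell}(G)$ is the minimum number of colors in an edge-coloring of $G$ such that for every $k$-subset $S$ of $V(G)$ there exist $\ell$ internally disjoint proper $S$-trees. *)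

theory Defs
  imports Main
begin

text \<open>A graph is given by a vertex set V and an edge set E of 2-element vertex sets.
  Edge-colorings are functions from edges to natural numbers (colors).\<close>

definition adj_rel :: "'a set set \<Rightarrow> ('a \<times> 'a) set" where
  "adj_rel ET = {(x, y). {x, y} \<in> ET}"

definition has_cycle :: "'a set set \<Rightarrow> bool" where
  "has_cycle ET \<longleftrightarrow> (\<exists>cs. length cs \<ge> 3 \<and> distinct cs \<and>
      (\<forall>i < length cs. {cs ! i, cs ! ((i + 1) mod length cs)} \<in> ET))"

definition is_tree_in :: "'a set \<Rightarrow> 'a set set \<Rightarrow> 'a set \<Rightarrow> 'a set set \<Rightarrow> bool" where
  "is_tree_in V E VT ET \<longleftrightarrow> VT \<subseteq> V \<and> ET \<subseteq> E \<and> (\<forall>e\<in>ET. e \<subseteq> VT) \<and> VT \<noteq> {} \<and>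
     (\<forall>u\<in>VT. \<forall>v\<in>VT. (u, v) \<in> (adj_rel ET)\<^sup>*) \<and> \<not> has_cycle ET"

definition is_S_tree :: "'a set \<Rightarrow> 'a set set \<Rightarrow> 'a set \<Rightarrow> 'a set \<Rightarrow> 'a set set \<Rightarrow> bool" where
  "is_S_tree V E S VT ET \<longleftrightarrow> is_tree_in V E VT ET \<and> S \<subseteq> VT"

definition proper_tree :: "('a set \<Rightarrow> nat) \<Rightarrow> 'a set set \<Rightarrow> bool" where
  "proper_tree c ET \<longleftrightarrow> (\<forall>e1\<in>ET. \<forall>e2\<in>ET. e1 \<noteq> e2 \<and> e1 \<inter> e2 \<noteq> {} \<longrightarrow> c e1 \<noteq> c e2)"

definition int_disj_S_trees ::
  "'a set \<Rightarrow> 'a set set \<Rightarrow> 'a set \<Rightarrow> nat \<Rightarrow> (nat \<Rightarrow> 'a set \<times> 'a set set) \<Rightarrow> bool" where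
  "int_disj_S_trees V E S l T \<longleftrightarrow>
     (\<forall>i<l. is_S_tree V E S (fst (T i)) (snd (T i))) \<and>
     (\<forall>i<l. \<forall>j<l. i \<noteq> j \<longrightarrow> snd (T i) \<inter> snd (T j) = {} \<and> fst (T i) \<inter> fst (T j) = S)"

definition kappa :: "'a set \<Rightarrow> 'a set set \<Rightarrow> nat \<Rightarrow> nat" where
  "kappa V E k = Min {Max {l. \<exists>T. int_disj_S_trees V E S l T} | S. S \<subseteq> V \<and> card S = k}"

definition px :: "'a set \<Rightarrow> 'a set set \<Rightarrow> nat \<Rightarrow> nat \<Rightarrow> nat" where
  "px V E k l = (if 2 \<le> k \<and> k \<le> card V \<and> 1 \<le> l \<and> l \<le> kappa V E k then
     (LEAST m. \<exists>c :: 'a set \<Rightarrow> nat. c ` E \<subseteq> {..<m} \<and>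
        (\<forall>S. S \<subseteq> V \<and> card S = k \<longrightarrow>
           (\<exists>T. int_disj_S_trees V E S l T \<and> (\<forall>i<l. proper_tree c (snd (T i))))))
   else undefined)"

definition complete_V :: "nat \<Rightarrow> nat set" where
  "complete_V n = {..<n}"

definition complete_E :: "nat \<Rightarrow> nat set set" where
  "complete_E n = {{u, v} | u v. u < n \<and> v < n \<and> u \<noteq> v}"

end

theory Submission
  imports Defs
begin

text \<open>With two colours every vertex of a proper tree has degree at most 2, so the trees are
  paths whose colours alternate; with a single colour a proper tree has at most one edge, which
  gives the lower bound since the trees must contain n - 1 >= 3 vertices. For the upper bound,
  colour an edge of K_2k by the parity of the sum of its endpoints. Two interleaved zigzag
  Hamiltonian paths, one of them avoiding the vertex 0, are edge-disjoint and alternate in colour;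
  rotating all labels by x modulo 2k preserves the colouring and handles the deleted vertex x.
  For n = 2k + 1 the edges at the new vertex 2k get colour 0, and 2k is attached to those ends of the
  paths whose last edge has colour 1.\<close>

section \<open>Paths as trees\<close>

definition path_edges :: "(nat \<Rightarrow> 'a) \<Rightarrow> nat \<Rightarrow> 'a set set" where
  "path_edges f L = {{f i, f (Suc i)} | i. Suc i < L}"

definition alternating :: "('a set \<Rightarrow> nat) \<Rightarrow> (nat \<Rightarrow> 'a) \<Rightarrow> nat \<Rightarrow> bool" where
  "alternating c f L \<longleftrightarrow>
     (\<forall>i. Suc (Suc i) < L \<longrightarrow> c {f i, f (Suc i)} \<noteq> c {f (Suc i), f (Suc (Suc i))})"

lemma path_edgesI: "Suc i < L \<Longrightarrow> {f i, f (Suc i)} \<in> path_edges f L"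
  unfolding path_edges_def by blast

lemma path_edges_image: "path_edges f L = (\<lambda>i. {f i, f (Suc i)}) ` {..<L - 1}"
  unfolding path_edges_def by auto

lemma path_edges_subset: "f ` {..<L} \<subseteq> A \<Longrightarrow> e \<in> path_edges f L \<Longrightarrow> e \<subseteq> A"
  unfolding path_edges_def by auto

lemma sym_adj_rel: "sym (adj_rel ET)"
  unfolding adj_rel_def sym_def by (simp add: insert_commute)

lemma path_edges_connected: "i < L \<Longrightarrow> (f 0, f i) \<in> (adj_rel (path_edges f L))\<^sup>*"
proof (induction i)
  case (Suc i)
  then have "{f i, f (Suc i)} \<in> path_edges f L" by (intro path_edgesI)
  then have "(f i, f (Suc i)) \<in> adj_rel (path_edges f L)" unfolding adj_rel_def by simp
  with Suc show ?case by (simp add: rtrancl_into_rtrancl)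
qed simp

lemma path_edges_neighbour:
  assumes inj: "inj_on f {..<L}" and "J < L" and "{f J, y} \<in> path_edges f L"
  shows "(0 < J \<and> y = f (J - 1)) \<or> (Suc J < L \<and> y = f (Suc J))"
proof -
  from assms(3) obtain i where i: "{f J, y} = {f i, f (Suc i)}" "Suc i < L"
    unfolding path_edges_def by blast
  then have "(f J = f i \<and> y = f (Suc i)) \<or> (f J = f (Suc i) \<and> y = f i)"
    by (auto simp: doubleton_eq_iff)
  with inj \<open>J < L\<close> i(2) have "(J = i \<and> y = f (Suc i)) \<or> (J = Suc i \<and> y = f i)"
    by (auto dest: inj_onD)
  with i(2) show ?thesis by auto
qed

lemma has_cycle_two_neighbours:
  assumes len: "length cs \<ge> 3" and dist: "distinct cs"
    and cyc: "\<forall>i < length cs. {cs ! i, cs ! ((i + 1) mod length cs)} \<in> ET"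
    and v: "v \<in> set cs"
  obtains y z where "y \<noteq> z" "y \<in> set cs" "z \<in> set cs" "{v, y} \<in> ET" "{v, z} \<in> ET"
proof -
  define N where "N = length cs"
  obtain k where k: "k < N" "cs ! k = v" using v unfolding N_def by (auto simp: in_set_conv_nth)
  define nxt where "nxt = (if k + 1 < N then k + 1 else 0)"
  define prv where "prv = (if k = 0 then N - 1 else k - 1)"
  have N: "N \<ge> 3" using len unfolding N_def .
  have pos: "nxt < N" "prv < N" "nxt \<noteq> prv" "(k + 1) mod N = nxt" "(prv + 1) mod N = k"
    unfolding nxt_def prv_def using k(1) N by (auto simp: less_Suc_eq_le dest: Suc_lessI)
  have "cs ! nxt \<noteq> cs ! prv" using dist pos unfolding N_def by (simp add: nth_eq_iff_index_eq)
  moreover have "{v, cs ! nxt} \<in> ET" using cyc k pos unfolding N_def by metis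
  moreover have "{v, cs ! prv} \<in> ET" using cyc pos k unfolding N_def by (metis insert_commute)
  ultimately show thesis using that pos unfolding N_def by (meson nth_mem)
qed

lemma path_not_has_cycle:
  assumes inj: "inj_on f {..<L}"
  shows "\<not> has_cycle (path_edges f L)"
proof
  assume "has_cycle (path_edges f L)"
  then obtain cs where len: "length cs \<ge> 3" and dist: "distinct cs"
    and cyc: "\<forall>i < length cs. {cs ! i, cs ! ((i + 1) mod length cs)} \<in> path_edges f L"
    unfolding has_cycle_def by blast
  have cs_path: "cs ! i \<in> f ` {..<L}" if "i < length cs" for i
  proof -
    have "{cs ! i, cs ! ((i + 1) mod length cs)} \<in> path_edges f L" using cyc that by blast
    from path_edges_subset[OF subset_refl this] show ?thesis by blast
  qed
  \<comment> \<open>The vertex of the cycle that comes last on the path has only one neighbour on the cycle.\<close>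
  define Js where "Js = {j. j < L \<and> f j \<in> set cs}"
  define J where "J = Max Js"
  have "finite Js" unfolding Js_def by simp
  moreover have "Js \<noteq> {}"
  proof -
    have "0 < length cs" using len by linarith
    then obtain j where "j < L" "cs ! 0 = f j" using cs_path[of 0] by auto
    moreover have "cs ! 0 \<in> set cs" using len by (intro nth_mem) linarith
    ultimately show ?thesis unfolding Js_def by auto
  qed
  ultimately have "J \<in> Js" and J_max: "\<And>j. j \<in> Js \<Longrightarrow> j \<le> J"
    unfolding J_def by (simp_all add: Max_in)
  then have J: "J < L" "f J \<in> set cs" unfolding Js_def by simp_all
  obtain y z where yz: "y \<noteq> z" "y \<in> set cs" "z \<in> set cs"
    "{f J, y} \<in> path_edges f L" "{f J, z} \<in> path_edges f L"
    using has_cycle_two_neighbours[OF len dist cyc J(2)] .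
  have only_neighbour: "v = f (J - 1)" if "v \<in> set cs" "{f J, v} \<in> path_edges f L" for v
  proof -
    have "\<not> (Suc J < L \<and> v = f (Suc J))" using J_max[of "Suc J"] that(1) unfolding Js_def by auto
    then show ?thesis using path_edges_neighbour[OF inj J(1) that(2)] by blast
  qed
  from only_neighbour[OF yz(2,4)] only_neighbour[OF yz(3,5)] yz(1) show False by simp
qed

lemma path_is_tree_in:
  assumes inj: "inj_on f {..<L}" and "L \<ge> 1" and "f ` {..<L} \<subseteq> V"
    and edges: "\<And>i. Suc i < L \<Longrightarrow> {f i, f (Suc i)} \<in> E"
  shows "is_tree_in V E (f ` {..<L}) (path_edges f L)"
  unfolding is_tree_in_def
proof (intro conjI ballI)
  show "path_edges f L \<subseteq> E" using edges unfolding path_edges_def by blast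
  show "e \<subseteq> f ` {..<L}" if "e \<in> path_edges f L" for e
    by (rule path_edges_subset[OF subset_refl that])
  show "\<not> has_cycle (path_edges f L)" using inj by (rule path_not_has_cycle)
  fix u v assume "u \<in> f ` {..<L}" "v \<in> f ` {..<L}"
  then obtain i j where "i < L" "j < L" "u = f i" "v = f j" by auto
  then show "(u, v) \<in> (adj_rel (path_edges f L))\<^sup>*"
    using path_edges_connected[of i L f] path_edges_connected[of j L f]
    by (meson rtrancl_trans sym_adj_rel sym_rtrancl symD)
qed (use assms in \<open>auto simp: lessThan_empty_iff\<close>)

lemma path_proper_tree:
  assumes inj: "inj_on f {..<L}" and alt: "alternating c f L"
  shows "proper_tree c (path_edges f L)"
  unfolding proper_tree_def
proof (intro ballI impI)
  fix e1 e2 assume "e1 \<in> path_edges f L" "e2 \<in> path_edges f L" and e12: "e1 \<noteq> e2 \<and> e1 \<inter> e2 \<noteq> {}"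
  then obtain i j where i: "e1 = {f i, f (Suc i)}" "Suc i < L" and j: "e2 = {f j, f (Suc j)}" "Suc j < L"
    unfolding path_edges_def by blast
  obtain a b where "a \<in> {i, Suc i}" "b \<in> {j, Suc j}" "f a = f b"
    using e12 i(1) j(1) by blast
  with inj i(2) j(2) have "a = b" by (auto dest: inj_onD)
  with \<open>a \<in> _\<close> \<open>b \<in> _\<close> have "i = j \<or> i = Suc j \<or> Suc i = j" by auto
  with e12 i j have "i = Suc j \<or> j = Suc i" by auto
  with alt i j show "c e1 \<noteq> c e2" unfolding alternating_def by (metis insert_commute)
qed

lemma alternating_parity:
  assumes "\<And>j. Suc j < L \<Longrightarrow> c {f j, f (Suc j)} = (j + p) mod 2"
  shows "alternating c f L"
  unfolding alternating_def
proof (intro allI impI)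
  fix i assume "Suc (Suc i) < L"
  then have "c {f i, f (Suc i)} = (i + p) mod 2" "c {f (Suc i), f (Suc (Suc i))} = (Suc i + p) mod 2"
    using assms by auto
  then show "c {f i, f (Suc i)} \<noteq> c {f (Suc i), f (Suc (Suc i))}" by presburger
qed

definition path_snoc :: "(nat \<Rightarrow> 'a) \<Rightarrow> nat \<Rightarrow> 'a \<Rightarrow> nat \<Rightarrow> 'a" where
  "path_snoc f L w j = (if j < L then f j else w)"

definition path_cons :: "'a \<Rightarrow> (nat \<Rightarrow> 'a) \<Rightarrow> nat \<Rightarrow> 'a" where
  "path_cons a f j = (if j = 0 then a else f (j - 1))"

lemma image_path_snoc: "path_snoc f L w ` {..<Suc L} = insert w (f ` {..<L})"
  unfolding path_snoc_def by (auto simp: image_def less_Suc_eq)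

lemma inj_on_path_snoc:
  "inj_on f {..<L} \<Longrightarrow> w \<notin> f ` {..<L} \<Longrightarrow> inj_on (path_snoc f L w) {..<Suc L}"
  unfolding path_snoc_def inj_on_def by (auto simp: less_Suc_eq)

lemma path_edges_snoc:
  assumes "L \<ge> 1"
  shows "path_edges (path_snoc f L w) (Suc L) = insert {f (L - 1), w} (path_edges f L)"
proof -
  have "{..<L} = insert (L - 1) {..<L - 1}" "Suc (L - 1) = L" using assms by auto
  then have "path_edges (path_snoc f L w) (Suc L) = insert {path_snoc f L w (L - 1), path_snoc f L w L}
      ((\<lambda>i. {path_snoc f L w i, path_snoc f L w (Suc i)}) ` {..<L - 1})"
    by (simp add: path_edges_image)
  also have "\<dots> = insert {f (L - 1), w} (path_edges f L)"
    using assms unfolding path_edges_image path_snoc_def by (intro arg_cong2[where f = insert] image_cong) auto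
  finally show ?thesis .
qed

lemma image_path_cons: "path_cons a f ` {..<Suc L} = insert a (f ` {..<L})"
  unfolding path_cons_def by (force simp: less_Suc_eq_0_disj)

lemma inj_on_path_cons:
  "inj_on f {..<L} \<Longrightarrow> a \<notin> f ` {..<L} \<Longrightarrow> inj_on (path_cons a f) {..<Suc L}"
  unfolding path_cons_def inj_on_def by (auto simp: less_Suc_eq_0_disj)

lemma path_edges_cons:
  assumes "L \<ge> 1"
  shows "path_edges (path_cons a f) (Suc L) = insert {a, f 0} (path_edges f L)"
proof -
  have "{..<L} = insert 0 (Suc ` {..<L - 1})" using assms lessThan_Suc_eq_insert_0[of "L - 1"] by simp
  then have "path_edges (path_cons a f) (Suc L) = insert {path_cons a f 0, path_cons a f 1}
      ((\<lambda>i. {path_cons a f (Suc i), path_cons a f (Suc (Suc i))}) ` {..<L - 1})"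
    by (simp add: path_edges_image image_image)
  also have "\<dots> = insert {a, f 0} (path_edges f L)"
    unfolding path_edges_image path_cons_def by simp
  finally show ?thesis .
qed

definition has_proper_S_trees ::
  "'a set \<Rightarrow> 'a set set \<Rightarrow> ('a set \<Rightarrow> nat) \<Rightarrow> nat \<Rightarrow> 'a set \<Rightarrow> bool" where
  "has_proper_S_trees V E c l S \<longleftrightarrow>
     (\<exists>T. int_disj_S_trees V E S l T \<and> (\<forall>i<l. proper_tree c (snd (T i))))"

lemma two_paths_proper_S_trees:
  assumes f: "inj_on f {..<L}" "L \<ge> 1" "f ` {..<L} = S" "alternating c f L"
    and g: "inj_on g {..<M}" "M \<ge> 1" "g ` {..<M} = W" "alternating c g M"
    and "S \<subseteq> W" "W \<subseteq> V"
    and edges: "\<And>i. Suc i < L \<Longrightarrow> {f i, f (Suc i)} \<in> E" "\<And>i. Suc i < M \<Longrightarrow> {g i, g (Suc i)} \<in> E"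
    and disj: "path_edges f L \<inter> path_edges g M = {}"
  shows "has_proper_S_trees V E c 2 S"
proof -
  define T where "T = (\<lambda>i::nat. if i = 0 then (S, path_edges f L) else (W, path_edges g M))"
  have "f ` {..<L} \<subseteq> V" "g ` {..<M} \<subseteq> V" using f(3) g(3) \<open>S \<subseteq> W\<close> \<open>W \<subseteq> V\<close> by simp_all
  then have "is_tree_in V E S (path_edges f L)" "is_tree_in V E W (path_edges g M)"
    using path_is_tree_in[OF f(1,2) _ edges(1)] path_is_tree_in[OF g(1,2) _ edges(2)]
    unfolding f(3) g(3) by blast+
  moreover have "proper_tree c (path_edges f L)" "proper_tree c (path_edges g M)"
    using path_proper_tree[OF f(1,4)] path_proper_tree[OF g(1,4)] .
  moreover have "\<And>i::nat. i < 2 \<longleftrightarrow> i = 0 \<or> i = 1" by auto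
  ultimately have "int_disj_S_trees V E S 2 T \<and> (\<forall>i<2. proper_tree c (snd (T i)))"
    using disj \<open>S \<subseteq> W\<close> unfolding int_disj_S_trees_def is_S_tree_def T_def
    by (auto simp: Int_absorb1 Int_absorb2)
  then show ?thesis unfolding has_proper_S_trees_def by blast
qed

section \<open>Monochromatic trees and the proper index\<close>

lemma proper_treeD:
  assumes "proper_tree c ET" "e1 \<in> ET" "e2 \<in> ET" "e1 \<noteq> e2" "x \<in> e1" "x \<in> e2"
  shows "c e1 \<noteq> c e2"
  using assms unfolding proper_tree_def by blast

lemma monochromatic_proper_tree:
  assumes tree: "is_tree_in V E VT ET" and proper: "proper_tree c ET" and mono: "\<forall>e\<in>ET. c e = c0"
    and "a \<in> VT" "b \<in> VT" "d \<in> VT"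
  shows "a = b \<or> a = d \<or> b = d"
proof (rule ccontr)
  assume distinct: "\<not> ?thesis"
  \<comment> \<open>Two distinct edges at a common vertex would need different colours, so every walk from a
    ends at a or at a neighbour of a.\<close>
  have "v = a \<or> {a, v} \<in> ET" if "(a, v) \<in> (adj_rel ET)\<^sup>*" for v
    using that
  proof (induction rule: rtrancl_induct)
    case (step y z)
    then have yz: "{y, z} \<in> ET" unfolding adj_rel_def by simp
    show ?case
    proof (cases "y = a")
      case False
      with step.IH have ay: "{a, y} \<in> ET" by simp
      have "{y, z} = {a, y}"
        using proper_treeD[OF proper yz ay, of y] mono yz ay by auto
      with ay show ?thesis by (auto simp: doubleton_eq_iff)
    qed (use yz in simp)
  qed simp
  moreover have "(a, b) \<in> (adj_rel ET)\<^sup>*" "(a, d) \<in> (adj_rel ET)\<^sup>*"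
    using tree assms(4-6) unfolding is_tree_in_def by blast+
  ultimately have ab: "{a, b} \<in> ET" and ad: "{a, d} \<in> ET" using distinct by auto
  have "{a, b} \<noteq> {a, d}" using distinct by (auto simp: doubleton_eq_iff)
  with proper_treeD[OF proper ab ad, of a] mono ab ad show False by simp
qed

lemma proper_S_trees_need_two_colours:
  assumes "has_proper_S_trees V E c l S" "1 \<le> l" "c ` E \<subseteq> {..<m}"
    and "a \<in> S" "b \<in> S" "d \<in> S" "a \<noteq> b" "a \<noteq> d" "b \<noteq> d"
  shows "2 \<le> m"
proof (rule ccontr)
  assume "\<not> 2 \<le> m"
  with assms(3) have mono: "\<forall>e\<in>E. c e = 0" by fastforce
  obtain T where T: "int_disj_S_trees V E S l T" "\<forall>i<l. proper_tree c (snd (T i))"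
    using assms(1) unfolding has_proper_S_trees_def by blast
  with assms(2) have tree: "is_tree_in V E (fst (T 0)) (snd (T 0))" "S \<subseteq> fst (T 0)"
    and proper: "proper_tree c (snd (T 0))"
    unfolding int_disj_S_trees_def is_S_tree_def by auto
  moreover have "\<forall>e\<in>snd (T 0). c e = 0" using tree(1) mono unfolding is_tree_in_def by blast
  ultimately show False
    using monochromatic_proper_tree[OF tree(1) proper, of 0 a b d] assms(4-9) by blast
qed

lemma int_disj_S_trees_le_card:
  assumes T: "int_disj_S_trees V E S l T" and "finite E" and S: "a \<in> S" "b \<in> S" "a \<noteq> b"
  shows "l \<le> card E"
proof -
  have tree: "is_tree_in V E (fst (T i)) (snd (T i))" "S \<subseteq> fst (T i)" if "i < l" for i
    using T that unfolding int_disj_S_trees_def is_S_tree_def by auto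
  have "snd (T i) \<noteq> {}" if "i < l" for i
  proof -
    have "(a, b) \<in> (adj_rel (snd (T i)))\<^sup>*" using tree[OF that] S unfolding is_tree_in_def by blast
    with \<open>a \<noteq> b\<close> obtain y where "(a, y) \<in> adj_rel (snd (T i))" by (metis converse_rtranclE)
    then show ?thesis unfolding adj_rel_def by auto
  qed
  then have pick: "(SOME e. e \<in> snd (T i)) \<in> snd (T i)" if "i < l" for i
    using that by (simp add: some_in_eq)
  \<comment> \<open>Choosing one edge from each tree is injective, the trees being edge-disjoint.\<close>
  have "inj_on (\<lambda>i. SOME e. e \<in> snd (T i)) {..<l}"
    using T pick unfolding int_disj_S_trees_def inj_on_def by (metis disjoint_iff lessThan_iff)
  moreover have "(\<lambda>i. SOME e. e \<in> snd (T i)) ` {..<l} \<subseteq> E"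
    using pick tree(1) unfolding is_tree_in_def by blast
  ultimately show ?thesis using card_inj_on_le[OF _ _ \<open>finite E\<close>] by fastforce
qed

lemma kappa_ge:
  assumes "finite V" "finite E" "2 \<le> k" "k \<le> card V"
    and trees: "\<And>S. S \<subseteq> V \<Longrightarrow> card S = k \<Longrightarrow> \<exists>T. int_disj_S_trees V E S l T"
  shows "l \<le> kappa V E k"
proof -
  define M where "M = (\<lambda>S. Max {l. \<exists>T. int_disj_S_trees V E S l T}) ` {S. S \<subseteq> V \<and> card S = k}"
  have "kappa V E k = Min M" unfolding kappa_def M_def by (simp only: setcompr_eq_image)
  moreover have "finite {S. S \<subseteq> V \<and> card S = k}"
    using finite_Collect_subsets[OF \<open>finite V\<close>] by (rule rev_finite_subset) auto
  then have "finite M" unfolding M_def by (rule finite_imageI)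
  moreover have "M \<noteq> {}"
    unfolding M_def using obtain_subset_with_card_n[OF \<open>k \<le> card V\<close>] by blast
  moreover have "l \<le> Max {l. \<exists>T. int_disj_S_trees V E S l T}" if S: "S \<subseteq> V" "card S = k" for S
  proof -
    have "finite S" "\<not> card S \<le> Suc 0" using S \<open>finite V\<close> \<open>2 \<le> k\<close> finite_subset by auto
    then obtain a b where ab: "a \<in> S" "b \<in> S" "a \<noteq> b" by (auto simp: card_le_Suc0_iff_eq)
    have "{l. \<exists>T. int_disj_S_trees V E S l T} \<subseteq> {..card E}"
      using int_disj_S_trees_le_card[OF _ \<open>finite E\<close> ab] by auto
    then have "finite {l. \<exists>T. int_disj_S_trees V E S l T}" by (rule finite_subset) simp
    moreover have "l \<in> {l. \<exists>T. int_disj_S_trees V E S l T}" using trees[OF S] by blast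
    ultimately show ?thesis by (rule Max_ge)
  qed
  ultimately show ?thesis unfolding M_def by (auto simp: Min_ge_iff)
qed

lemma px_eqI:
  assumes "finite V" "finite E" "2 \<le> k" "k \<le> card V" "1 \<le> l"
    and witness: "c ` E \<subseteq> {..<m}" "\<And>S. S \<subseteq> V \<Longrightarrow> card S = k \<Longrightarrow> has_proper_S_trees V E c l S"
    and minimal: "\<And>c' m'. c' ` E \<subseteq> {..<m'} \<Longrightarrow>
      (\<And>S. S \<subseteq> V \<Longrightarrow> card S = k \<Longrightarrow> has_proper_S_trees V E c' l S) \<Longrightarrow> m \<le> m'"
  shows "px V E k l = m"
proof -
  have "l \<le> kappa V E k"
    using assms(1-4) witness(2) unfolding has_proper_S_trees_def by (intro kappa_ge) blast+
  then have "px V E k l = (LEAST m. \<exists>c. c ` E \<subseteq> {..<m} \<and>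
      (\<forall>S. S \<subseteq> V \<and> card S = k \<longrightarrow> has_proper_S_trees V E c l S))"
    using assms(3-5) unfolding px_def has_proper_S_trees_def by simp
  also have "\<dots> = m"
  proof (rule Least_equality)
    show "\<exists>c. c ` E \<subseteq> {..<m} \<and> (\<forall>S. S \<subseteq> V \<and> card S = k \<longrightarrow> has_proper_S_trees V E c l S)"
      using witness by blast
  qed (use minimal in blast)
  finally show ?thesis .
qed

section \<open>Two zigzag Hamiltonian paths\<close>

definition rotate_mod :: "nat \<Rightarrow> nat \<Rightarrow> nat \<Rightarrow> nat" where
  "rotate_mod m x v = (v + x) mod m"

lemma inj_on_rotate_mod: "inj_on (rotate_mod m x) {..<m}"
proof (rule inj_onI)
  fix a b assume "a \<in> {..<m}" "b \<in> {..<m}" and "rotate_mod m x a = rotate_mod m x b"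
  then have "(int a + int x) mod int m = (int b + int x) mod int m"
    unfolding rotate_mod_def by (metis of_nat_add zmod_int)
  then have "((int a + int x) mod int m - int x) mod int m = ((int b + int x) mod int m - int x) mod int m"
    by simp
  then have "int a mod int m = int b mod int m" by (simp add: mod_diff_left_eq)
  with \<open>a \<in> {..<m}\<close> \<open>b \<in> {..<m}\<close> show "a = b" by (metis lessThan_iff mod_less zmod_int of_nat_eq_iff)
qed

lemma rotate_mod_less: "0 < m \<Longrightarrow> rotate_mod m x v < m"
  unfolding rotate_mod_def by simp

lemma image_rotate_mod: "0 < m \<Longrightarrow> rotate_mod m x ` {..<m} = {..<m}"
  using inj_on_rotate_mod rotate_mod_less by (intro endo_inj_surj) auto

lemma rotate_mod_parity:
  assumes "even m"
  shows "(rotate_mod m x a + rotate_mod m x b) mod 2 = (a + b) mod 2"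
proof -
  have rot: "rotate_mod m x v mod 2 = (v + x) mod 2" for v
    using assms unfolding rotate_mod_def by (simp add: mod_mod_cancel)
  have "(rotate_mod m x a + rotate_mod m x b) mod 2 = ((a + x) + (b + x)) mod 2"
    by (metis rot mod_add_eq)
  also have "\<dots> = (a + b) mod 2" by presburger
  finally show ?thesis .
qed

text \<open>On the vertices 0, ..., 2k-1, the path zigzag_up visits 1, 2k-1, 2, 2k-2, ..., k and
  zigzag_down visits 2k-1, 0, 2k-2, 1, ..., k-1. Consecutive vertices sum to 2k, 2k+1, 2k, ...
  and to 2k-1, 2k-2, 2k-1, ... respectively, so the two paths share no edge and the parity of the
  edge sums alternates along each of them.\<close>

definition zigzag_up :: "nat \<Rightarrow> nat \<Rightarrow> nat" where
  "zigzag_up k j = (if even j then j div 2 + 1 else 2*k - 1 - j div 2)"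

definition zigzag_down :: "nat \<Rightarrow> nat \<Rightarrow> nat" where
  "zigzag_down k j = (if even j then 2*k - 1 - j div 2 else j div 2)"

lemma even_odd_cases: fixes j :: nat obtains q where "j = 2*q" | q where "j = Suc (2*q)"
  by (metis evenE oddE Suc_eq_plus1)

lemma zigzag_up_simps [simp]:
  "zigzag_up k (2*q) = q + 1" "zigzag_up k (Suc (2*q)) = 2*k - 1 - q"
  unfolding zigzag_up_def by simp_all

lemma zigzag_down_simps [simp]:
  "zigzag_down k (2*q) = 2*k - 1 - q" "zigzag_down k (Suc (2*q)) = q"
  unfolding zigzag_down_def by simp_all

lemma inj_on_zigzag_up: "inj_on (zigzag_up k) {..<2*k-1}"
proof (rule inj_onI)
  fix i j assume "i \<in> {..<2*k-1}" "j \<in> {..<2*k-1}" "zigzag_up k i = zigzag_up k j"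
  then show "i = j" by (cases i rule: even_odd_cases; cases j rule: even_odd_cases) auto
qed

lemma inj_on_zigzag_down: "inj_on (zigzag_down k) {..<2*k}"
proof (rule inj_onI)
  fix i j assume "i \<in> {..<2*k}" "j \<in> {..<2*k}" "zigzag_down k i = zigzag_down k j"
  then show "i = j" by (cases i rule: even_odd_cases; cases j rule: even_odd_cases) auto
qed

lemma zigzag_up_bounds: "j < 2*k-1 \<Longrightarrow> 1 \<le> zigzag_up k j \<and> zigzag_up k j < 2*k"
  by (cases j rule: even_odd_cases) (simp; arith)+

lemma zigzag_down_less: "j < 2*k \<Longrightarrow> zigzag_down k j < 2*k"
  by (cases j rule: even_odd_cases) (simp; arith)+

lemma image_zigzag_up: "zigzag_up k ` {..<2*k-1} = {1..<2*k}"
proof (rule card_subset_eq)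
  show "zigzag_up k ` {..<2*k-1} \<subseteq> {1..<2*k}" using zigzag_up_bounds by auto
  show "card (zigzag_up k ` {..<2*k-1}) = card {1..<2*k}"
    using card_image[OF inj_on_zigzag_up] by simp
qed simp

lemma image_zigzag_down: "zigzag_down k ` {..<2*k} = {..<2*k}"
proof (rule card_subset_eq)
  show "zigzag_down k ` {..<2*k} \<subseteq> {..<2*k}" using zigzag_down_less by auto
  show "card (zigzag_down k ` {..<2*k}) = card {..<2*k}"
    using card_image[OF inj_on_zigzag_down] by simp
qed simp

lemma zigzag_up_edge_sum:
  assumes "Suc j < 2*k-1"
  shows "zigzag_up k j + zigzag_up k (Suc j) = (if even j then 2*k else 2*k+1)"
proof (cases j rule: even_odd_cases)
  case (2 q)
  then have "Suc j = 2*(q+1)" by simp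
  then have "zigzag_up k (Suc j) = q + 2" by (simp only: zigzag_up_simps)
  with 2 assms show ?thesis by auto
qed (use assms in simp)

lemma zigzag_down_edge_sum:
  assumes "Suc j < 2*k"
  shows "zigzag_down k j + zigzag_down k (Suc j) = (if even j then 2*k-1 else 2*k-2)"
proof (cases j rule: even_odd_cases)
  case (2 q)
  then have "Suc j = 2*(q+1)" by simp
  then have "zigzag_down k (Suc j) = 2*k - 2 - q" by (simp only: zigzag_down_simps)
  with 2 assms show ?thesis by auto
qed (use assms in simp)

lemma rotate_mod_doubleton_sum:
  assumes "{rotate_mod m x a, rotate_mod m x b} = {rotate_mod m x a', rotate_mod m x b'}"
    and "a < m" "b < m" "a' < m" "b' < m"
  shows "a + b = a' + b'"
proof -
  from assms(1) have "(rotate_mod m x a = rotate_mod m x a' \<and> rotate_mod m x b = rotate_mod m x b') \<or>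
      (rotate_mod m x a = rotate_mod m x b' \<and> rotate_mod m x b = rotate_mod m x a')"
    by (auto simp: doubleton_eq_iff)
  with inj_on_rotate_mod[of m x] assms(2-5) have "(a = a' \<and> b = b') \<or> (a = b' \<and> b = a')"
    by (auto dest: inj_onD)
  then show ?thesis by auto
qed

lemma image_rotate_mod_remove:
  assumes "x < m"
  shows "rotate_mod m x ` {1..<m} = {..<m} - {x}"
proof -
  have "rotate_mod m x ` ({..<m} - {0}) = rotate_mod m x ` {..<m} - rotate_mod m x ` {0}"
    using assms by (intro inj_on_image_set_diff[OF inj_on_rotate_mod]) auto
  moreover have "{1..<m} = {..<m} - {0}" by auto
  ultimately show ?thesis using assms image_rotate_mod[of m x] by (simp add: rotate_mod_def)
qed

lemma zigzag_paths:
  assumes k: "2 \<le> k" and x: "x < 2*k"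
  obtains f g where
    "inj_on f {..<2*k-1}" "f ` {..<2*k-1} = {..<2*k} - {x}"
    "inj_on g {..<2*k}" "g ` {..<2*k} = {..<2*k}"
    "\<And>j. Suc j < 2*k-1 \<Longrightarrow> (f j + f (Suc j)) mod 2 = j mod 2"
    "\<And>j. Suc j < 2*k \<Longrightarrow> (g j + g (Suc j)) mod 2 = Suc j mod 2"
    "path_edges f (2*k-1) \<inter> path_edges g (2*k) = {}"
    "f (2*k-2) \<noteq> g (2*k-1)" "odd (x + f 0)" "{x, f 0} \<notin> path_edges g (2*k)"
proof
  let ?r = "rotate_mod (2*k) x"
  have up: "zigzag_up k j < 2*k" if "j < 2*k-1" for j using zigzag_up_bounds[OF that] by simp
  have down: "zigzag_down k j < 2*k" if "j < 2*k" for j using zigzag_down_less[OF that] .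
  show "inj_on (?r \<circ> zigzag_up k) {..<2*k-1}"
    using up by (intro comp_inj_on inj_on_zigzag_up inj_on_subset[OF inj_on_rotate_mod]) auto
  show "inj_on (?r \<circ> zigzag_down k) {..<2*k}"
    using down by (intro comp_inj_on inj_on_zigzag_down inj_on_subset[OF inj_on_rotate_mod]) auto
  show "(?r \<circ> zigzag_up k) ` {..<2*k-1} = {..<2*k} - {x}"
    unfolding image_comp[symmetric] image_zigzag_up by (rule image_rotate_mod_remove[OF x])
  show "(?r \<circ> zigzag_down k) ` {..<2*k} = {..<2*k}"
    unfolding image_comp[symmetric] image_zigzag_down using k by (intro image_rotate_mod) simp
  have parity: "(?r a + ?r b) mod 2 = (a + b) mod 2" for a b by (rule rotate_mod_parity) simp
  show "((?r \<circ> zigzag_up k) j + (?r \<circ> zigzag_up k) (Suc j)) mod 2 = j mod 2" if "Suc j < 2*k-1" for j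
    unfolding o_def parity using zigzag_up_edge_sum[OF that] by (simp add: mod2_eq_if)
  show "((?r \<circ> zigzag_down k) j + (?r \<circ> zigzag_down k) (Suc j)) mod 2 = Suc j mod 2" if "Suc j < 2*k" for j
    unfolding o_def parity using zigzag_down_edge_sum[OF that] k by (simp add: mod2_eq_if)
  show "path_edges (?r \<circ> zigzag_up k) (2*k-1) \<inter> path_edges (?r \<circ> zigzag_down k) (2*k) = {}"
  proof (rule ccontr)
    assume "\<not> ?thesis"
    then obtain i j where i: "Suc i < 2*k-1" and j: "Suc j < 2*k"
      and eq: "{?r (zigzag_up k i), ?r (zigzag_up k (Suc i))} = {?r (zigzag_down k j), ?r (zigzag_down k (Suc j))}"
      unfolding path_edges_def by auto
    have "zigzag_up k i + zigzag_up k (Suc i) = zigzag_down k j + zigzag_down k (Suc j)"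
      using rotate_mod_doubleton_sum[OF eq] i j up down by simp
    with zigzag_up_edge_sum[OF i] zigzag_down_edge_sum[OF j] k show False by (auto split: if_splits)
  qed
  show "(?r \<circ> zigzag_up k) (2*k-2) \<noteq> (?r \<circ> zigzag_down k) (2*k-1)"
  proof -
    have "2*k-2 = 2*(k-1)" "2*k-1 = Suc (2*(k-1))" using k by simp_all
    then have "zigzag_up k (2*k-2) = k" "zigzag_down k (2*k-1) = k - 1"
      using k by (simp_all only: zigzag_up_simps zigzag_down_simps)
    then show ?thesis using inj_on_rotate_mod[of "2*k" x] k by (auto dest: inj_onD)
  qed
  show "odd (x + (?r \<circ> zigzag_up k) 0)"
  proof (cases "Suc x < 2*k")
    case False
    with x have "Suc x = 2*k" by simp
    then show ?thesis by (simp add: rotate_mod_def zigzag_up_def) presburger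
  qed (simp add: rotate_mod_def zigzag_up_def)
  show "{x, (?r \<circ> zigzag_up k) 0} \<notin> path_edges (?r \<circ> zigzag_down k) (2*k)"
  proof
    assume "{x, (?r \<circ> zigzag_up k) 0} \<in> path_edges (?r \<circ> zigzag_down k) (2*k)"
    then obtain j where j: "Suc j < 2*k"
      and eq: "{?r 0, ?r 1} = {?r (zigzag_down k j), ?r (zigzag_down k (Suc j))}"
      using x unfolding path_edges_def by (auto simp: rotate_mod_def zigzag_up_def)
    have "0 + 1 = zigzag_down k j + zigzag_down k (Suc j)"
      using rotate_mod_doubleton_sum[OF eq] j down k by simp
    with zigzag_down_edge_sum[OF j] k show False by (auto split: if_splits)
  qed
qed

section \<open>Complete graphs\<close>

lemma finite_complete_E: "finite (complete_E n)"
proof (rule finite_subset)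
  show "complete_E n \<subseteq> Pow {..<n}" unfolding complete_E_def by auto
qed simp

lemma path_edge_in_complete_E:
  assumes "inj_on f {..<L}" "f ` {..<L} \<subseteq> {..<n}" "Suc i < L"
  shows "{f i, f (Suc i)} \<in> complete_E n"
proof -
  have "f i \<noteq> f (Suc i)" using assms(1,3) by (auto dest: inj_onD)
  moreover have "f i < n" "f (Suc i) < n" using assms(2,3) by (auto simp: image_subset_iff)
  ultimately show ?thesis unfolding complete_E_def by blast
qed

definition parity_colouring :: "nat \<Rightarrow> nat set \<Rightarrow> nat" where
  "parity_colouring n e = (if odd n \<and> n - 1 \<in> e then 0 else \<Sum>e mod 2)"

lemma parity_colouring_less_2: "parity_colouring n e < 2"
  unfolding parity_colouring_def by simp

lemma parity_colouring_doubleton: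
  "a \<noteq> b \<Longrightarrow> even n \<or> (a \<noteq> n - 1 \<and> b \<noteq> n - 1) \<Longrightarrow> parity_colouring n {a, b} = (a + b) mod 2"
  unfolding parity_colouring_def by auto

lemma parity_colouring_top: "odd n \<Longrightarrow> a \<noteq> n - 1 \<Longrightarrow> parity_colouring n {a, n - 1} = 0"
  unfolding parity_colouring_def by simp

lemma parity_colouring_path_snoc_top:
  assumes inj: "inj_on f {..<L}" and below: "f ` {..<L} \<subseteq> {..<2*k}" and "L \<ge> 1"
    and parity: "\<And>j. Suc j < L \<Longrightarrow> (f j + f (Suc j)) mod 2 = (j + p) mod 2"
    and last: "(L - 1 + p) mod 2 = 0" and "Suc j < Suc L"
  shows "parity_colouring (Suc (2*k)) {path_snoc f L (2*k) j, path_snoc f L (2*k) (Suc j)} = (j + p) mod 2"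
proof (cases "Suc j < L")
  case True
  then have "f j \<noteq> f (Suc j)" "f j < 2*k" "f (Suc j) < 2*k"
    using inj below by (auto dest: inj_onD simp: image_subset_iff)
  with True show ?thesis
    unfolding path_snoc_def using parity_colouring_doubleton parity[OF True] by simp
next
  case False
  with \<open>Suc j < Suc L\<close> have "j = L - 1" by simp
  moreover have "f (L - 1) < 2*k" using below \<open>L \<ge> 1\<close> by (auto simp: image_subset_iff)
  ultimately show ?thesis
    unfolding path_snoc_def using parity_colouring_top[of "Suc (2*k)"] last \<open>L \<ge> 1\<close> by simp
qed

lemma even_complete_graph_proper_S_trees:
  assumes k: "2 \<le> k" and x: "x < 2*k"
  shows "has_proper_S_trees {..<2*k} (complete_E (2*k)) (parity_colouring (2*k)) 2 ({..<2*k} - {x})"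
proof -
  obtain f g where f: "inj_on f {..<2*k-1}" "f ` {..<2*k-1} = {..<2*k} - {x}"
    and g: "inj_on g {..<2*k}" "g ` {..<2*k} = {..<2*k}"
    and parity: "\<And>j. Suc j < 2*k-1 \<Longrightarrow> (f j + f (Suc j)) mod 2 = j mod 2"
      "\<And>j. Suc j < 2*k \<Longrightarrow> (g j + g (Suc j)) mod 2 = Suc j mod 2"
    and disj: "path_edges f (2*k-1) \<inter> path_edges g (2*k) = {}"
    by (rule zigzag_paths[OF k x], rule that, assumption+)
  have colour: "parity_colouring (2*k) {h j, h (Suc j)} = (h j + h (Suc j)) mod 2"
    if "inj_on h {..<L}" "Suc j < L" for h :: "nat \<Rightarrow> nat" and L j
    using that by (intro parity_colouring_doubleton) (auto dest: inj_onD)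
  show ?thesis
  proof (rule two_paths_proper_S_trees[OF f(1) _ f(2) _ g(1) _ g(2)])
    show "alternating (parity_colouring (2*k)) f (2*k-1)"
      by (rule alternating_parity[where p = 0]) (simp add: colour[OF f(1)] parity(1))
    show "alternating (parity_colouring (2*k)) g (2*k)"
      by (rule alternating_parity[where p = 1]) (simp add: colour[OF g(1)] parity(2))
    show "path_edges f (2*k-1) \<inter> path_edges g (2*k) = {}" by (rule disj)
    show "{f i, f (Suc i)} \<in> complete_E (2*k)" if "Suc i < 2*k-1" for i
      using path_edge_in_complete_E[OF f(1) _ that] f(2) by blast
    show "{g i, g (Suc i)} \<in> complete_E (2*k)" if "Suc i < 2*k" for i
      using path_edge_in_complete_E[OF g(1) _ that] g(2) by blast
  qed (use k in auto)
qed

lemma odd_complete_graph_proper_S_trees: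
  assumes k: "2 \<le> k" and x: "x < 2*k"
  shows "has_proper_S_trees {..<Suc (2*k)} (complete_E (Suc (2*k))) (parity_colouring (Suc (2*k))) 2
    ({..<Suc (2*k)} - {x})"
proof -
  obtain f g where f: "inj_on f {..<2*k-1}" "f ` {..<2*k-1} = {..<2*k} - {x}"
    and g: "inj_on g {..<2*k}" "g ` {..<2*k} = {..<2*k}"
    and parity: "\<And>j. Suc j < 2*k-1 \<Longrightarrow> (f j + f (Suc j)) mod 2 = (j + 0) mod 2"
      "\<And>j. Suc j < 2*k \<Longrightarrow> (g j + g (Suc j)) mod 2 = (j + 1) mod 2"
    and disj: "path_edges f (2*k-1) \<inter> path_edges g (2*k) = {}"
    and ends: "f (2*k-2) \<noteq> g (2*k-1)"
    by (rule zigzag_paths[OF k x], rule that, simp_all)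
  define f' where "f' = path_snoc f (2*k-1) (2*k)"
  define g' where "g' = path_snoc g (2*k) (2*k)"
  have len: "2*k-1-1 = 2*k-2" using k by simp
  have f': "inj_on f' {..<Suc (2*k-1)}" "f' ` {..<Suc (2*k-1)} = {..<Suc (2*k)} - {x}"
    unfolding f'_def image_path_snoc f(2)
    by (rule inj_on_path_snoc[OF f(1)], unfold f(2), simp) (use x in auto)
  have g': "inj_on g' {..<Suc (2*k)}" "g' ` {..<Suc (2*k)} = {..<Suc (2*k)}"
    unfolding g'_def image_path_snoc g(2)
    by (rule inj_on_path_snoc[OF g(1)], unfold g(2), simp) auto
  have "path_edges f' (Suc (2*k-1)) \<inter> path_edges g' (Suc (2*k)) = {}"
  proof -
    have "2*k \<notin> e" if "e \<in> path_edges f (2*k-1) \<or> e \<in> path_edges g (2*k)" for e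
      using that path_edges_subset[of f "2*k-1" "{..<2*k}"] path_edges_subset[of g "2*k" "{..<2*k}"]
        f(2) g(2) by blast
    moreover have "{f (2*k-2), 2*k} \<noteq> {g (2*k-1), 2*k}" using ends by (auto simp: doubleton_eq_iff)
    moreover have "1 \<le> 2*k-1" "1 \<le> 2*k" using k by simp_all
    ultimately show ?thesis
      unfolding f'_def g'_def path_edges_snoc[OF \<open>1 \<le> 2*k-1\<close>] path_edges_snoc[OF \<open>1 \<le> 2*k\<close>] len
      using disj by auto
  qed
  moreover have "alternating (parity_colouring (Suc (2*k))) f' (Suc (2*k-1))"
    unfolding f'_def using f k
    by (intro alternating_parity[where p = 0] parity_colouring_path_snoc_top parity(1)) auto
  moreover have "alternating (parity_colouring (Suc (2*k))) g' (Suc (2*k))"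
    unfolding g'_def using g k
    by (intro alternating_parity[where p = 1] parity_colouring_path_snoc_top parity(2)) auto
  ultimately show ?thesis
    using f' g' path_edge_in_complete_E[OF f'(1)] path_edge_in_complete_E[OF g'(1)]
    by (intro two_paths_proper_S_trees[OF f'(1) _ f'(2) _ g'(1) _ g'(2)]) auto
qed

lemma odd_complete_graph_proper_S_trees_top:
  assumes k: "2 \<le> k"
  shows "has_proper_S_trees {..<Suc (2*k)} (complete_E (Suc (2*k))) (parity_colouring (Suc (2*k))) 2
    {..<2*k}"
proof -
  obtain f g where f: "inj_on f {..<2*k-1}" "f ` {..<2*k-1} = {..<2*k} - {0}"
    and g: "inj_on g {..<2*k}" "g ` {..<2*k} = {..<2*k}"
    and parity: "\<And>j. Suc j < 2*k-1 \<Longrightarrow> (f j + f (Suc j)) mod 2 = j mod 2"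
      "\<And>j. Suc j < 2*k \<Longrightarrow> (g j + g (Suc j)) mod 2 = (j + 1) mod 2"
    and disj: "path_edges f (2*k-1) \<inter> path_edges g (2*k) = {}"
    and start: "odd (f 0)" "{0, f 0} \<notin> path_edges g (2*k)"
    by (rule zigzag_paths[OF k, where x = 0], use k in simp, rule that, simp_all)
  \<comment> \<open>The zigzag path g already spans the vertices 0, ..., 2k - 1; the vertex 0 missed by f and
    the new vertex 2k are attached to the two ends of f.\<close>
  define f' where "f' = path_snoc f (2*k-1) (2*k)"
  define h where "h = path_cons 0 f'"
  have len: "1 \<le> 2*k-1" "2*k-1-1 = 2*k-2" using k by simp_all
  have f': "inj_on f' {..<Suc (2*k-1)}" "f' ` {..<Suc (2*k-1)} = {..<Suc (2*k)} - {0}"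
    unfolding f'_def image_path_snoc f(2)
    by (rule inj_on_path_snoc[OF f(1)], unfold f(2), simp) (use k in auto)
  have h: "inj_on h {..<Suc (Suc (2*k-1))}" "h ` {..<Suc (Suc (2*k-1))} = {..<Suc (2*k)}"
    unfolding h_def image_path_cons f'(2)
    by (rule inj_on_path_cons[OF f'(1)], unfold f'(2), simp) auto
  have "path_edges g (2*k) \<inter> path_edges h (Suc (Suc (2*k-1))) = {}"
  proof -
    have "{f (2*k-2), 2*k} \<notin> path_edges g (2*k)"
      using path_edges_subset[of g "2*k" "{..<2*k}"] g(2) by blast
    moreover have "f' 0 = f 0" unfolding f'_def path_snoc_def using k by simp
    moreover have "1 \<le> Suc (2*k-1)" by simp
    ultimately show ?thesis
      unfolding h_def path_edges_cons[OF \<open>1 \<le> Suc (2*k-1)\<close>] \<open>f' 0 = f 0\<close>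
      unfolding f'_def path_edges_snoc[OF len(1)] len(2)
      using disj start(2) by auto
  qed
  moreover have "alternating (parity_colouring (Suc (2*k))) h (Suc (Suc (2*k-1)))"
  proof (rule alternating_parity[where p = 1])
    fix j assume j: "Suc j < Suc (Suc (2*k-1))"
    show "parity_colouring (Suc (2*k)) {h j, h (Suc j)} = (j + 1) mod 2"
    proof (cases j)
      case 0
      have "f 0 \<noteq> 0" "f 0 < 2*k" using f(2) k by (auto simp: image_subset_iff)
      with start(1) 0 show ?thesis
        unfolding h_def path_cons_def f'_def path_snoc_def using k
        by (simp add: parity_colouring_doubleton odd_iff_mod_2_eq_one)
    next
      case (Suc i)
      have "parity_colouring (Suc (2*k)) {f' i, f' (Suc i)} = (i + 0) mod 2"
        unfolding f'_def using f k j Suc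
        by (intro parity_colouring_path_snoc_top) (auto simp: parity(1))
      with Suc show ?thesis unfolding h_def path_cons_def by simp
    qed
  qed
  moreover have "alternating (parity_colouring (Suc (2*k))) g (2*k)"
  proof (rule alternating_parity[where p = 1])
    fix j assume "Suc j < 2*k"
    then have "g j \<noteq> g (Suc j)" "g j < 2*k" "g (Suc j) < 2*k"
      using g by (auto dest: inj_onD)
    then show "parity_colouring (Suc (2*k)) {g j, g (Suc j)} = (j + 1) mod 2"
      using parity(2)[OF \<open>Suc j < 2*k\<close>] by (simp add: parity_colouring_doubleton)
  qed
  ultimately show ?thesis
    using g h path_edge_in_complete_E[OF g(1)] path_edge_in_complete_E[OF h(1)] k
    by (intro two_paths_proper_S_trees[OF g(1) _ g(2) _ h(1) _ h(2)]) auto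
qed

lemma complete_graph_proper_S_trees:
  assumes n: "4 \<le> n" and S: "S \<subseteq> {..<n}" "card S = n - 1"
  shows "has_proper_S_trees (complete_V n) (complete_E n) (parity_colouring n) 2 S"
proof -
  obtain x where x: "x < n" "S = {..<n} - {x}"
  proof -
    have "S \<noteq> {..<n}" using S n by auto
    with S obtain x where "x < n" "x \<notin> S" by auto
    moreover from this S have "S = {..<n} - {x}" by (intro card_subset_eq) auto
    ultimately show thesis using that by blast
  qed
  show ?thesis
  proof (cases "even n")
    case True
    then obtain k where "n = 2*k" by blast
    with n x show ?thesis
      using even_complete_graph_proper_S_trees[of k x] by (simp add: complete_V_def)
  next
    case False
    then obtain k where k: "n = Suc (2*k)" by (metis oddE Suc_eq_plus1)
    with n have "2 \<le> k" by simp
    show ?thesis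
    proof (cases "x < 2*k")
      case True
      with k x show ?thesis
        using odd_complete_graph_proper_S_trees[OF \<open>2 \<le> k\<close> True] by (simp add: complete_V_def)
    next
      case False
      with k x have "S = {..<2*k}" by auto
      with k show ?thesis
        using odd_complete_graph_proper_S_trees_top[OF \<open>2 \<le> k\<close>] by (simp add: complete_V_def)
    qed
  qed
qed

theorem theorem2p5:
  fixes n :: nat
  assumes "n \<ge> 4"
  shows "px (complete_V n) (complete_E n) (n - 1) 2 = 2"
proof (rule px_eqI)
  show "finite (complete_V n)" "finite (complete_E n)" "n - 1 \<le> card (complete_V n)"
    by (simp_all add: complete_V_def finite_complete_E)
  show "2 \<le> n - 1" "1 \<le> (2::nat)" using assms by simp_all
  show "parity_colouring n ` complete_E n \<subseteq> {..<2}"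
    using parity_colouring_less_2 by blast
  show "has_proper_S_trees (complete_V n) (complete_E n) (parity_colouring n) 2 S"
    if "S \<subseteq> complete_V n" "card S = n - 1" for S
    using complete_graph_proper_S_trees[OF assms] that by (simp add: complete_V_def)
  show "2 \<le> m" if "c ` complete_E n \<subseteq> {..<m}"
    and "\<And>S. S \<subseteq> complete_V n \<Longrightarrow> card S = n - 1 \<Longrightarrow> has_proper_S_trees (complete_V n) (complete_E n) c 2 S"
    for c m
  proof (rule proper_S_trees_need_two_colours[OF _ _ that(1), of _ 2 "{..<n - 1}" 0 1 2])
    show "has_proper_S_trees (complete_V n) (complete_E n) c 2 {..<n - 1}"
      using that(2) by (simp add: complete_V_def)
  qed (use assms in auto)
qed

end
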